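(* Let $w(x)=\frac{2}{1+x^2}$, $0<s<\tfrac12$, $\tau_s=\left(\frac{\Gamma(1-2s)\sin(s\pi)}{\pi}\int_{\mathbb{R}}w^2\right)^{-1}$. For $h\in L^\infty(\mathbb{R})$ let $T(h)$ be the unique solution of $(-\Delta)^sV=\tau_sh$ on $\mathbb{R}$ with $V(x)\to0$ as $|x|\to\infty$, and let $v_w=T(w^2)$. For $\phi$ define \[ N(\phi)=\frac{(w+\phi)^2}{T((w+\phi)^2)}-\frac{w^2}{v_w}-2w\phi+2w^2\frac{\int_{\mathbb{R}}w\phi\,dx}{\int_{\mathbb{R}}w^2\,dx}. \] Let $\|\phi\|_*=\sup_{x}(1+|x|)^2|\phi(x)|$, $\mathcal{H}=\{\phi\in L^\infty(\mathbb{R}):\int_{\mathbb{R}}\phi\,\tfrac{dw}{dx}\,dx=0\}$ and, for a constant $C_0>0$ and small $\delta>0$, $\mathcal{D}=\{\phi\in\mathcal{H}:\|\phi\|_*\le C_0(1-2s)^{1-\delta}\}$. Then there is a constant $C$ such that for $1-2s$ sufficiently small and every $\phi\in\mathcal{D}$, \[ \|N(\phi)\|_*\le C\big(\|\phi\|_*+\sigma(1-2s)\big)\|\phi\|_*, \] where $\sigma(1-2s)\le C(1-2s)^{1-\delta}$ as $1-2s\to0$.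
   Context: $(-\Delta)^s$ is the fractional Laplacian on $\mathbb{R}$ (Fourier multiplier $|\xi|^{2s}$); $w$ is the unique positive even decaying solution of $(-\Delta)^{1/2}w+w-w^2=0$. *)

theory Defs
  imports "HOL-Analysis.Analysis" "HOL-Analysis.Gamma_Function"
begin

definition w :: "real \<Rightarrow> real" where
  "w x = 2 / (1 + x^2)"

text \<open>Normalising constant of the one-dimensional Riesz potential:
  the fundamental solution of (-Delta)^s on R, 0<s<1/2, is
  c_s |x|^(2s-1) with c_s = Gamma(1-2s) sin(s pi)/pi.\<close>
definition riesz_const :: "real \<Rightarrow> real" where
  "riesz_const s = Gamma (1 - 2 * s) * sin (s * pi) / pi"

definition tau :: "real \<Rightarrow> real" where
  "tau s = inverse (riesz_const s * (LINT x|lborel. (w x)^2))"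

text \<open>T(h): the solution of (-Delta)^s V = tau_s h decaying at infinity,
  given by the Riesz potential V = tau_s (c_s |.|^(2s-1) * h).\<close>
definition T :: "real \<Rightarrow> (real \<Rightarrow> real) \<Rightarrow> real \<Rightarrow> real" where
  "T s h x = tau s * riesz_const s * (LINT y|lborel. \<bar>x - y\<bar> powr (2 * s - 1) * h y)"

definition v_w :: "real \<Rightarrow> real \<Rightarrow> real" where
  "v_w s = T s (\<lambda>x. (w x)^2)"

definition N :: "real \<Rightarrow> (real \<Rightarrow> real) \<Rightarrow> real \<Rightarrow> real" where
  "N s \<phi> x =
     (w x + \<phi> x)^2 / T s (\<lambda>y. (w y + \<phi> y)^2) x
     - (w x)^2 / v_w s x
     - 2 * w x * \<phi> x
     + 2 * (w x)^2 * (LINT y|lborel. w y * \<phi> y) / (LINT y|lborel. (w y)^2)"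

definition star_norm :: "(real \<Rightarrow> real) \<Rightarrow> real" where
  "star_norm \<phi> = (SUP x. (1 + \<bar>x\<bar>)^2 * \<bar>\<phi> x\<bar>)"

definition H_space :: "(real \<Rightarrow> real) set" where
  "H_space = {\<phi>. \<phi> \<in> borel_measurable lborel \<and>
                  (\<exists>B. AE x in lborel. \<bar>\<phi> x\<bar> \<le> B) \<and>
                  (LINT x|lborel. \<phi> x * deriv w x) = 0}"

definition D_set :: "real \<Rightarrow> real \<Rightarrow> real \<Rightarrow> (real \<Rightarrow> real) set" where
  "D_set C0 \<delta> s = {\<phi> \<in> H_space.
       \<forall>x. (1 + \<bar>x\<bar>)^2 * \<bar>\<phi> x\<bar> \<le> C0 * (1 - 2 * s) powr (1 - \<delta>)}"

end

theory Submission
  imports Defs "HOL-Probability.Sinc_Integral"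
begin

text \<open>
  Put t = 1 - 2s. By the choice of tau_s, T h is the Riesz potential
  \<integral> |x - y|^(-t) h(y) dy divided by \<integral> w^2. As t \<rightarrow> 0 the kernel tends to 1: it differs
  from 1 by an integrable singular part on |z| \<le> 1 and by at most t |z| elsewhere. Hence,
  for |h(y)| \<le> B (1 + y^2)^(-2), T h(x) differs from \<integral> h / \<integral> w^2 by at most C B t (1 + |x|),
  and T h(x) \<ge> c (1 + |x|)^(-t) when h \<ge> 0 is bounded below on [-1, 1]. Consequently
  v_w = 1 + O(t (1 + |x|)) and, with m = ||\<phi>||_*,
  T((w + \<phi>)^2) = v_w + 2 \<integral> w \<phi> / \<integral> w^2 + O(m (t (1 + |x|) + m)).
  Expanding the quotients in N(\<phi>) leaves only products of w or \<phi> with such errors, and the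
  factor 1 + |x| lost in the errors is absorbed by the decay (1 + |x|)^(-2) of w and \<phi>.
  So ||N(\<phi>)||_* \<le> C m (m + t): the claim with \<sigma>(t) = t, since \<phi> \<in> D forces m \<le> 1 once t
  is small.
\<close>

section \<open>The decay profile (1 + y^2)^(-2)\<close>

definition quartic_decay :: "real \<Rightarrow> real" where
  "quartic_decay y = inverse ((1 + y\<^sup>2)\<^sup>2)"

lemma quartic_decay_measurable [measurable]: "quartic_decay \<in> borel_measurable borel"
  unfolding quartic_decay_def by measurable

lemma w_measurable [measurable]: "w \<in> borel_measurable borel"
  unfolding w_def by measurable

lemma one_plus_square_pos: "0 < 1 + (y::real)\<^sup>2"
  by (simp add: add_pos_nonneg)

lemma quartic_decay_pos: "0 < quartic_decay y"
  unfolding quartic_decay_def using one_plus_square_pos[of y] by simp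

lemma quartic_decay_nonneg: "0 \<le> quartic_decay y"
  using quartic_decay_pos[of y] by simp

lemma quartic_decay_le_inverse: "quartic_decay y \<le> inverse (1 + y\<^sup>2)"
  unfolding quartic_decay_def power2_eq_square[of "1 + y\<^sup>2"]
  using one_plus_square_pos[of y] by (simp add: divide_simps)

lemma quartic_decay_le_1: "quartic_decay y \<le> 1"
proof -
  have "inverse (1 + y\<^sup>2) \<le> 1"
    by (simp add: inverse_le_1_iff)
  then show ?thesis
    using quartic_decay_le_inverse[of y] by linarith
qed

lemma abs_mult_quartic_decay_le: "\<bar>y\<bar> * quartic_decay y \<le> inverse (1 + y\<^sup>2)"
proof -
  have "\<bar>y\<bar> \<le> 1 + y\<^sup>2"
    using zero_le_power2[of "\<bar>y\<bar> - 1"] by (simp add: power2_eq_square algebra_simps)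
  then show ?thesis
    unfolding quartic_decay_def power2_eq_square[of "1 + y\<^sup>2"]
    using one_plus_square_pos[of y] by (simp add: divide_simps)
qed

lemma integrable_inverse_1_plus_square_lborel:
  "integrable lborel (\<lambda>y::real. inverse (1 + y\<^sup>2))"
  using integrable_inverse_1_plus_square by (simp add: set_integrable_def einterval_iff)

lemma integrable_quartic_decay: "integrable lborel quartic_decay"
  by (rule Bochner_Integration.integrable_bound[OF integrable_inverse_1_plus_square_lborel])
     (auto simp: abs_of_pos quartic_decay_pos quartic_decay_le_inverse add_pos_nonneg)

lemma integrable_abs_mult_quartic_decay: "integrable lborel (\<lambda>y. \<bar>y\<bar> * quartic_decay y)"
  by (rule Bochner_Integration.integrable_bound[OF integrable_inverse_1_plus_square_lborel])
     (auto simp: abs_mult abs_of_pos quartic_decay_pos abs_mult_quartic_decay_le add_pos_nonneg)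

definition quartic_decay_const :: real where
  "quartic_decay_const =
     4 + (LINT y|lborel. quartic_decay y) + (LINT y|lborel. \<bar>y\<bar> * quartic_decay y)"

lemma quartic_decay_moments_nonneg:
  "0 \<le> (LINT y|lborel. quartic_decay y)" "0 \<le> (LINT y|lborel. \<bar>y\<bar> * quartic_decay y)"
  by (auto intro!: integral_nonneg_AE AE_I2 simp: quartic_decay_nonneg)

lemma quartic_decay_const_pos: "0 < quartic_decay_const"
  unfolding quartic_decay_const_def using quartic_decay_moments_nonneg by simp

lemma nonneg_of_abs_le_mult_quartic_decay:
  fixes f :: "real \<Rightarrow> real"
  assumes "\<bar>f y\<bar> \<le> B * quartic_decay y"
  shows "0 \<le> B"
  using order_trans[OF abs_ge_zero assms] quartic_decay_pos[of y] by (simp add: zero_le_mult_iff)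

lemma integral_dominated_by_quartic_decay:
  fixes f :: "real \<Rightarrow> real" and B :: real
  assumes [measurable]: "f \<in> borel_measurable lborel"
    and f: "\<And>y. \<bar>f y\<bar> \<le> B * quartic_decay y"
  shows "integrable lborel f" and "\<bar>integral\<^sup>L lborel f\<bar> \<le> B * quartic_decay_const"
proof -
  have "0 \<le> B"
    by (rule nonneg_of_abs_le_mult_quartic_decay[OF f])
  have dominated: "norm (f y) \<le> norm (B * quartic_decay y)" for y
    using f[of y] \<open>0 \<le> B\<close> by (simp add: abs_mult quartic_decay_nonneg)
  show "integrable lborel f"
  proof (rule Bochner_Integration.integrable_bound)
    show "integrable lborel (\<lambda>y. B * quartic_decay y)"
      using integrable_quartic_decay by simp
    show "AE y in lborel. norm (f y) \<le> norm (B * quartic_decay y)"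
      by (intro AE_I2 dominated)
  qed measurable
  have "\<bar>integral\<^sup>L lborel f\<bar> \<le> (LINT y|lborel. B * quartic_decay y)"
    using \<open>integrable lborel f\<close> integrable_quartic_decay f
    by (intro order_trans[OF integral_abs_bound] integral_mono) simp_all
  also have "\<dots> = B * (LINT y|lborel. quartic_decay y)"
    by simp
  also have "\<dots> \<le> B * quartic_decay_const"
    using \<open>0 \<le> B\<close> quartic_decay_moments_nonneg
    by (intro mult_left_mono) (simp_all add: quartic_decay_const_def)
  finally show "\<bar>integral\<^sup>L lborel f\<bar> \<le> B * quartic_decay_const" .
qed

section \<open>Riesz potentials of functions with quartic decay\<close>

definition riesz_potential :: "real \<Rightarrow> (real \<Rightarrow> real) \<Rightarrow> real \<Rightarrow> real" where
  "riesz_potential t f x = (LINT y|lborel. \<bar>x - y\<bar> powr (-t) * f y)"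

lemma has_bochner_integral_lborel_reflect_shift:
  fixes f :: "real \<Rightarrow> real"
  assumes "has_bochner_integral lborel f I"
  shows "has_bochner_integral lborel (\<lambda>y. f (x - y)) I"
  using lborel_has_bochner_integral_real_affine_iff[of "-1" f I x] assms by simp

lemma has_bochner_integral_local_riesz_kernel:
  fixes t :: real
  assumes "0 \<le> t" "t < 1"
  shows "has_bochner_integral lborel (\<lambda>z. indicator {-1..1} z * \<bar>z\<bar> powr (-t)) (2 / (1 - t))"
proof -
  define k where "k z = indicator {0..1} z * z powr (-t)" for z :: real
  have "((\<lambda>z. z powr (-t)) has_integral 1 / (1 - t)) {0..1}"
    using has_integral_powr_from_0[of "-t" 1] assms by simp
  moreover have "k = (\<lambda>z. if z \<in> {0..1} then z powr (-t) else 0)"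
    by (auto simp: k_def)
  ultimately have k_integral: "(k has_integral 1 / (1 - t)) UNIV"
    by (simp only: has_integral_restrict_UNIV)
  have k_measurable: "k \<in> borel_measurable borel"
    unfolding k_def[abs_def] by measurable
  have k_nonneg: "0 \<le> k z" for z
    by (simp add: k_def)
  have "integral\<^sup>N lborel k = 1 / (1 - t)"
    by (rule nn_integral_has_integral_lborel[OF k_measurable k_nonneg k_integral])
  then have "has_bochner_integral lborel k (1 / (1 - t))"
    using assms k_measurable k_nonneg by (intro has_bochner_integral_nn_integral) auto
  moreover have "k = (\<lambda>z. indicator {0..} z *\<^sub>R (indicator {-1..1} z * \<bar>z\<bar> powr (-t)))"
    by (auto simp: k_def indicator_def)
  ultimately have "has_bochner_integral lborel
      (\<lambda>z. indicator {0..} z *\<^sub>R (indicator {-1..1} z * \<bar>z\<bar> powr (-t))) (1 / (1 - t))"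
    by simp
  from has_bochner_integral_even_function[OF this] show ?thesis
    by (simp add: indicator_def conj_commute)
qed

lemma has_bochner_integral_local_riesz_kernel_minus_1:
  fixes t x :: real
  assumes "0 \<le> t" "t < 1"
  shows "has_bochner_integral lborel
    (\<lambda>y. indicator {-1..1} (x - y) * (\<bar>x - y\<bar> powr (-t) - 1)) (2 / (1 - t) - 2)"
proof -
  have "has_bochner_integral lborel
      (\<lambda>z. indicator {-1..1} z * \<bar>z\<bar> powr (-t) - indicator {-1..1} z) (2 / (1 - t) - 2)"
    using assms by (intro has_bochner_integral_diff has_bochner_integral_local_riesz_kernel)
      (auto simp: has_bochner_integral_iff)
  from has_bochner_integral_lborel_reflect_shift[OF this, of x] show ?thesis
    by (simp add: algebra_simps)
qed

lemma riesz_kernel_le_local_part_plus_1: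
  fixes t z :: real
  assumes "0 \<le> t"
  shows "\<bar>z\<bar> powr (-t) \<le> indicator {-1..1} z * \<bar>z\<bar> powr (-t) + 1"
proof (cases "\<bar>z\<bar> \<le> 1")
  case False
  then have "\<bar>z\<bar> powr (-t) \<le> \<bar>z\<bar> powr 0"
    using assms by (intro powr_mono) auto
  moreover have "z \<noteq> 0" "z \<notin> {-1..1}"
    using False by auto
  ultimately show ?thesis
    by simp
qed (simp add: indicator_def abs_le_iff)

text \<open>At z = 0 the kernel is 0 powr (-t) = 0, hence the hypothesis z \<noteq> 0.\<close>

lemma riesz_kernel_dist_1_le:
  fixes t z :: real
  assumes "0 \<le> t" "z \<noteq> 0"
  shows "0 \<le> indicator {-1..1} z * (\<bar>z\<bar> powr (-t) - 1)"
    and "\<bar>\<bar>z\<bar> powr (-t) - 1\<bar> \<le> indicator {-1..1} z * (\<bar>z\<bar> powr (-t) - 1) + t * \<bar>z\<bar>"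
proof -
  have "0 \<le> \<bar>z\<bar> powr (-t) - 1 \<and> \<bar>\<bar>z\<bar> powr (-t) - 1\<bar> \<le> \<bar>z\<bar> powr (-t) - 1 + t * \<bar>z\<bar>"
    if "\<bar>z\<bar> \<le> 1"
  proof -
    have "\<bar>z\<bar> powr 0 \<le> \<bar>z\<bar> powr (-t)"
      using assms that by (intro powr_mono') auto
    then show ?thesis
      using assms by simp
  qed
  moreover have "\<bar>\<bar>z\<bar> powr (-t) - 1\<bar> \<le> t * \<bar>z\<bar>" if "1 < \<bar>z\<bar>"
  proof -
    have "\<bar>z\<bar> powr (-t) \<le> \<bar>z\<bar> powr 0"
      using assms that by (intro powr_mono) auto
    moreover have "1 - t * ln \<bar>z\<bar> \<le> \<bar>z\<bar> powr (-t)"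
      using exp_ge_add_one_self[of "-t * ln \<bar>z\<bar>"] assms by (simp add: powr_def)
    moreover have "t * ln \<bar>z\<bar> \<le> t * \<bar>z\<bar>"
      using assms ln_le_minus_one[of "\<bar>z\<bar>"] by (intro mult_left_mono) auto
    ultimately show ?thesis
      using assms that by simp
  qed
  ultimately show "0 \<le> indicator {-1..1} z * (\<bar>z\<bar> powr (-t) - 1)"
    and "\<bar>\<bar>z\<bar> powr (-t) - 1\<bar> \<le> indicator {-1..1} z * (\<bar>z\<bar> powr (-t) - 1) + t * \<bar>z\<bar>"
    by (auto simp: indicator_def abs_le_iff not_le)
qed

lemma riesz_integrand_abs_le:
  fixes f g :: "real \<Rightarrow> real" and t M x y :: real
  assumes "\<bar>f y\<bar> \<le> g y" "g y \<le> M" "0 \<le> t"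
  shows "\<bar>\<bar>x - y\<bar> powr (-t) * f y\<bar>
    \<le> M * (indicator {-1..1} (x - y) * \<bar>x - y\<bar> powr (-t)) + g y"
proof -
  have "\<bar>\<bar>x - y\<bar> powr (-t) * f y\<bar> = \<bar>x - y\<bar> powr (-t) * \<bar>f y\<bar>"
    by (simp add: abs_mult)
  also have "\<dots> \<le> (indicator {-1..1} (x - y) * \<bar>x - y\<bar> powr (-t) + 1) * \<bar>f y\<bar>"
    using riesz_kernel_le_local_part_plus_1[OF assms(3)] by (rule mult_right_mono) simp
  also have "\<dots> \<le> (indicator {-1..1} (x - y) * \<bar>x - y\<bar> powr (-t)) * M + g y"
  proof -
    have "indicator {-1..1} (x - y) * \<bar>x - y\<bar> powr (-t) * \<bar>f y\<bar>
        \<le> indicator {-1..1} (x - y) * \<bar>x - y\<bar> powr (-t) * M"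
      using assms(1,2) by (intro mult_left_mono) auto
    then show ?thesis
      using assms(1) by (simp add: distrib_right)
  qed
  finally show ?thesis
    by (simp add: mult.commute)
qed

lemma riesz_integrand_minus_integrand_abs_le:
  fixes f g :: "real \<Rightarrow> real" and t M x y :: real
  assumes "\<bar>f y\<bar> \<le> g y" "g y \<le> M" "0 \<le> t" "y \<noteq> x"
  shows "\<bar>(\<bar>x - y\<bar> powr (-t) - 1) * f y\<bar>
    \<le> M * (indicator {-1..1} (x - y) * (\<bar>x - y\<bar> powr (-t) - 1)) + t * (\<bar>x\<bar> * g y + \<bar>y\<bar> * g y)"
proof -
  define E where "E = indicator {-1..1} (x - y) * (\<bar>x - y\<bar> powr (-t) - 1)"
  note kernel = riesz_kernel_dist_1_le[OF assms(3), of "x - y", folded E_def]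
  have "\<bar>(\<bar>x - y\<bar> powr (-t) - 1) * f y\<bar> \<le> (E + t * \<bar>x - y\<bar>) * \<bar>f y\<bar>"
    unfolding abs_mult using kernel assms(4) by (intro mult_right_mono) auto
  also have "\<dots> \<le> E * M + t * ((\<bar>x\<bar> + \<bar>y\<bar>) * g y)"
  proof -
    have "E * \<bar>f y\<bar> \<le> E * M"
      using kernel assms by (intro mult_left_mono) auto
    moreover have "\<bar>x - y\<bar> * \<bar>f y\<bar> \<le> (\<bar>x\<bar> + \<bar>y\<bar>) * g y"
      using assms(1) by (intro mult_mono abs_triangle_ineq4) auto
    ultimately show ?thesis
      using assms(3) by (simp add: distrib_right mult.assoc mult_left_mono add_mono)
  qed
  finally show ?thesis
    by (simp add: E_def algebra_simps)
qed

lemma integrable_riesz_integrand: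
  fixes f g :: "real \<Rightarrow> real" and t M x :: real
  assumes [measurable]: "f \<in> borel_measurable lborel"
    and "\<And>y. \<bar>f y\<bar> \<le> g y" "\<And>y. g y \<le> M" "integrable lborel g" "0 \<le> t" "t < 1"
  shows "integrable lborel (\<lambda>y. \<bar>x - y\<bar> powr (-t) * f y)"
proof (rule Bochner_Integration.integrable_bound)
  show "integrable lborel (\<lambda>y. M * (indicator {-1..1} (x - y) * \<bar>x - y\<bar> powr (-t)) + g y)"
    using has_bochner_integral_lborel_reflect_shift[OF has_bochner_integral_local_riesz_kernel]
      assms(4-6) by (auto simp: has_bochner_integral_iff)
  show "AE y in lborel. norm (\<bar>x - y\<bar> powr (-t) * f y)
      \<le> norm (M * (indicator {-1..1} (x - y) * \<bar>x - y\<bar> powr (-t)) + g y)"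
  proof (intro AE_I2)
    fix y
    show "norm (\<bar>x - y\<bar> powr (-t) * f y)
        \<le> norm (M * (indicator {-1..1} (x - y) * \<bar>x - y\<bar> powr (-t)) + g y)"
      using order_trans[OF riesz_integrand_abs_le[where f=f and g=g and y=y and x=x,
          OF assms(2)[of y] assms(3)[of y] assms(5)] abs_ge_self]
      by simp
  qed
qed measurable

lemma riesz_potential_abs_le:
  fixes f g :: "real \<Rightarrow> real" and t M x :: real
  assumes [measurable]: "f \<in> borel_measurable lborel"
    and "\<And>y. \<bar>f y\<bar> \<le> g y" "\<And>y. g y \<le> M" "integrable lborel g" "0 \<le> t" "t \<le> 1/2"
  shows "\<bar>riesz_potential t f x\<bar> \<le> 4 * M + integral\<^sup>L lborel g"
proof -
  have local_kernel: "has_bochner_integral lborel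
      (\<lambda>y. indicator {-1..1} (x - y) * \<bar>x - y\<bar> powr (-t)) (2 / (1 - t))"
    using assms(5,6)
    by (intro has_bochner_integral_lborel_reflect_shift has_bochner_integral_local_riesz_kernel) auto
  have "0 \<le> M"
    using assms(2,3)[of 0] by linarith
  have "\<bar>riesz_potential t f x\<bar> \<le> (LINT y|lborel. \<bar>\<bar>x - y\<bar> powr (-t) * f y\<bar>)"
    unfolding riesz_potential_def by (rule integral_abs_bound)
  also have "\<dots> \<le> (LINT y|lborel. M * (indicator {-1..1} (x - y) * \<bar>x - y\<bar> powr (-t)) + g y)"
    using integrable_riesz_integrand[OF assms(1-4)] local_kernel assms
    by (intro integral_mono riesz_integrand_abs_le) (auto simp: has_bochner_integral_iff)
  also have "\<dots> = M * (2 / (1 - t)) + integral\<^sup>L lborel g"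
    using local_kernel assms(4) by (simp add: has_bochner_integral_iff)
  also have "\<dots> \<le> 4 * M + integral\<^sup>L lborel g"
  proof -
    have "2 / (1 - t) \<le> 4"
      using assms(6) by (simp add: divide_simps)
    from mult_left_mono[OF this \<open>0 \<le> M\<close>] show ?thesis
      by (simp add: mult.commute)
  qed
  finally show ?thesis .
qed

lemma riesz_potential_minus_integral_abs_le:
  fixes f g :: "real \<Rightarrow> real" and t M x :: real
  assumes [measurable]: "f \<in> borel_measurable lborel"
    and fg: "\<And>y. \<bar>f y\<bar> \<le> g y" and gM: "\<And>y. g y \<le> M"
    and g: "integrable lborel g" "integrable lborel (\<lambda>y. \<bar>y\<bar> * g y)"
    and t: "0 \<le> t" "t \<le> 1/2"
  shows "\<bar>riesz_potential t f x - integral\<^sup>L lborel f\<bar>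
    \<le> t * (4 * M + \<bar>x\<bar> * integral\<^sup>L lborel g + (LINT y|lborel. \<bar>y\<bar> * g y))"
proof -
  define E where "E y = indicator {-1..1} (x - y) * (\<bar>x - y\<bar> powr (-t) - 1)" for y
  have E: "has_bochner_integral lborel E (2 / (1 - t) - 2)"
    unfolding E_def using t by (intro has_bochner_integral_local_riesz_kernel_minus_1) auto
  have "0 \<le> M"
    using fg[of 0] gM[of 0] by linarith
  have f: "integrable lborel f"
    using order_trans[OF fg abs_ge_self]
    by (intro Bochner_Integration.integrable_bound[OF g(1)] AE_I2) auto
  have kf: "integrable lborel (\<lambda>y. \<bar>x - y\<bar> powr (-t) * f y)"
    using fg gM g t by (intro integrable_riesz_integrand) auto
  have "riesz_potential t f x - integral\<^sup>L lborel f
      = (LINT y|lborel. (\<bar>x - y\<bar> powr (-t) - 1) * f y)"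
    unfolding riesz_potential_def using kf f by (simp add: left_diff_distrib)
  also have "\<bar>\<dots>\<bar> \<le> (LINT y|lborel. \<bar>(\<bar>x - y\<bar> powr (-t) - 1) * f y\<bar>)"
    by (rule integral_abs_bound)
  also have "\<dots> \<le> (LINT y|lborel. M * E y + t * (\<bar>x\<bar> * g y + \<bar>y\<bar> * g y))"
  proof (rule integral_mono_AE)
    show "integrable lborel (\<lambda>y. \<bar>(\<bar>x - y\<bar> powr (-t) - 1) * f y\<bar>)"
      using kf f by (simp add: left_diff_distrib)
    show "integrable lborel (\<lambda>y. M * E y + t * (\<bar>x\<bar> * g y + \<bar>y\<bar> * g y))"
      using E g by (auto simp: has_bochner_integral_iff)
    have pointwise: "\<bar>(\<bar>x - y\<bar> powr (-t) - 1) * f y\<bar> \<le> M * E y + t * (\<bar>x\<bar> * g y + \<bar>y\<bar> * g y)"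
      if "y \<noteq> x" for y
      unfolding E_def
      by (rule riesz_integrand_minus_integrand_abs_le[where f=f and g=g and y=y, OF fg gM t(1) that])
    show "AE y in lborel.
        \<bar>(\<bar>x - y\<bar> powr (-t) - 1) * f y\<bar> \<le> M * E y + t * (\<bar>x\<bar> * g y + \<bar>y\<bar> * g y)"
      using AE_lborel_singleton[of x] by eventually_elim (use pointwise in auto)
  qed
  also have "\<dots> = M * (2 / (1 - t) - 2) + t * (\<bar>x\<bar> * integral\<^sup>L lborel g + (LINT y|lborel. \<bar>y\<bar> * g y))"
    using E g by (simp add: has_bochner_integral_iff)
  also have "\<dots> \<le> t * (4 * M + \<bar>x\<bar> * integral\<^sup>L lborel g + (LINT y|lborel. \<bar>y\<bar> * g y))"
  proof -
    have "2 / (1 - t) - 2 \<le> 4 * t"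
      using t mult_nonneg_nonneg[of t "1 - 2 * t"] by (simp add: divide_simps algebra_simps)
    from mult_left_mono[OF this \<open>0 \<le> M\<close>] show ?thesis
      by (simp add: algebra_simps)
  qed
  finally show ?thesis .
qed

lemma riesz_potential_ge:
  fixes f :: "real \<Rightarrow> real" and a t x :: real
  assumes "\<And>y. 0 \<le> f y" "\<And>y. y \<in> {-1..1} \<Longrightarrow> a \<le> f y"
    and "integrable lborel (\<lambda>y. \<bar>x - y\<bar> powr (-t) * f y)" "0 \<le> t"
  shows "2 * a * (1 + \<bar>x\<bar>) powr (-t) \<le> riesz_potential t f x"
proof -
  define c where "c = (1 + \<bar>x\<bar>) powr (-t)"
  have pointwise: "indicator {-1..1} y * (a * c) \<le> \<bar>x - y\<bar> powr (-t) * f y" if "y \<noteq> x" for y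
  proof (cases "y \<in> {-1..1}")
    case True
    then have "c \<le> \<bar>x - y\<bar> powr (-t)"
      unfolding c_def using that assms(4) by (intro powr_mono2') auto
    then show ?thesis
      using True assms(1,2)[of y] by (simp add: c_def mult.commute mult_mono)
  qed (use assms(1) in simp)
  have "2 * (a * c) = (LINT y|lborel. indicator {-1..1::real} y * (a * c))"
    by simp
  also have "\<dots> \<le> riesz_potential t f x"
    unfolding riesz_potential_def
  proof (rule integral_mono_AE)
    show "AE y in lborel. indicator {-1..1} y * (a * c) \<le> \<bar>x - y\<bar> powr (-t) * f y"
      using AE_lborel_singleton[of x] by eventually_elim (use pointwise in auto)
  qed (use assms(3) in auto)
  finally show ?thesis
    by (simp add: c_def)
qed

lemma riesz_potential_quartic_decay:
  fixes f :: "real \<Rightarrow> real" and B t x :: real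
  assumes [measurable]: "f \<in> borel_measurable lborel"
    and f: "\<And>y. \<bar>f y\<bar> \<le> B * quartic_decay y" and t: "0 \<le> t" "t \<le> 1/2"
  shows "integrable lborel (\<lambda>y. \<bar>x - y\<bar> powr (-t) * f y)"
    and "\<bar>riesz_potential t f x\<bar> \<le> B * quartic_decay_const"
    and "\<bar>riesz_potential t f x - integral\<^sup>L lborel f\<bar> \<le> B * quartic_decay_const * t * (1 + \<bar>x\<bar>)"
proof -
  define J0 J1 where "J0 = (LINT y|lborel. quartic_decay y)"
    and "J1 = (LINT y|lborel. \<bar>y\<bar> * quartic_decay y)"
  have "0 \<le> B"
    by (rule nonneg_of_abs_le_mult_quartic_decay[OF f])
  have "0 \<le> J0" "0 \<le> J1"
    unfolding J0_def J1_def by (fact quartic_decay_moments_nonneg)+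
  have g: "\<And>y. B * quartic_decay y \<le> B" "integrable lborel (\<lambda>y. B * quartic_decay y)"
    "integrable lborel (\<lambda>y. \<bar>y\<bar> * (B * quartic_decay y))"
    using integrable_quartic_decay integrable_abs_mult_quartic_decay quartic_decay_le_1 \<open>0 \<le> B\<close>
    by (auto simp: mult.left_commute[of "\<bar>_\<bar>" B] intro: mult_left_le)
  show "integrable lborel (\<lambda>y. \<bar>x - y\<bar> powr (-t) * f y)"
    using t by (intro integrable_riesz_integrand[OF _ f g(1,2)]) auto
  have "\<bar>riesz_potential t f x\<bar> \<le> B * (4 + J0)"
    using riesz_potential_abs_le[OF _ f g(1,2) t] by (simp add: J0_def algebra_simps)
  also have "\<dots> \<le> B * quartic_decay_const"
    unfolding quartic_decay_const_def J0_def[symmetric] J1_def[symmetric]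
    using \<open>0 \<le> B\<close> \<open>0 \<le> J1\<close> by (intro mult_left_mono) auto
  finally show "\<bar>riesz_potential t f x\<bar> \<le> B * quartic_decay_const" .
  have "\<bar>riesz_potential t f x - integral\<^sup>L lborel f\<bar> \<le> t * (B * (4 + \<bar>x\<bar> * J0 + J1))"
    using riesz_potential_minus_integral_abs_le[OF _ f g t]
    by (simp add: J0_def J1_def mult.left_commute[of "\<bar>_\<bar>" B] algebra_simps)
  also have "\<dots> \<le> t * (B * (quartic_decay_const * (1 + \<bar>x\<bar>)))"
    unfolding quartic_decay_const_def J0_def[symmetric] J1_def[symmetric]
    using t \<open>0 \<le> B\<close> \<open>0 \<le> J0\<close> \<open>0 \<le> J1\<close>
    by (intro mult_left_mono) (auto simp: algebra_simps)
  finally show "\<bar>riesz_potential t f x - integral\<^sup>L lborel f\<bar>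
      \<le> B * quartic_decay_const * t * (1 + \<bar>x\<bar>)"
    by (simp add: algebra_simps)
qed

lemma inverse_le_of_powr_lower_bound:
  fixes a b r t T :: real
  assumes "0 < a" "0 < b" "0 < r" "a * r powr (-t) \<le> b * T"
  shows "0 < T" and "1 / T \<le> b / a * r powr t"
proof -
  have "a / r powr t \<le> b * T"
    using assms(4) by (simp add: powr_minus divide_inverse)
  moreover have "0 < a / r powr t"
    using assms(1,3) by simp
  ultimately have "0 < b * T"
    by linarith
  then show "0 < T"
    using assms(2) by (simp add: zero_less_mult_iff)
  with \<open>a / r powr t \<le> b * T\<close> show "1 / T \<le> b / a * r powr t"
    using assms(1-3) by (simp add: divide_simps mult.commute mult.left_commute)
qed

section \<open>Pointwise algebra of the remainder\<close>

text \<open>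
  At a point x, with \<rho> = 1 + |x|, t = 1 - 2s and m = ||\<phi>||_*, the parameters stand for
  W = w(x), \<Phi> = \<phi>(x), Th = v_w(x), Tg = T((w + \<phi>)^2)(x), Tq = T(2 w \<phi> + \<phi>^2)(x)
  and Q = 2 \<integral> w \<phi> / \<integral> w^2.
\<close>

locale remainder_bounds =
  fixes c \<rho> t m W \<Phi> Th Tg Tq Q :: real
  assumes c_ge_1: "1 \<le> c" and \<rho>_ge_1: "1 \<le> \<rho>" and t_nonneg: "0 \<le> t" and m_nonneg: "0 \<le> m"
    and Tg_eq: "Tg = Th + Tq" and Th_pos: "0 < Th" and Tg_pos: "0 < Tg"
    and inverse_Tg_le: "1 / Tg \<le> c * \<rho>" and inverse_Tg_Th_le: "1 / (Tg * Th) \<le> c * \<rho>"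
    and Th_dist_1: "\<bar>Th - 1\<bar> \<le> c * (t * \<rho> + m)" and abs_Th_le: "\<bar>Th\<bar> \<le> c"
    and abs_Tq_le: "\<bar>Tq\<bar> \<le> c * m" and Tq_dist_Q: "\<bar>Tq - Q\<bar> \<le> c * m * (t * \<rho> + m)"
    and W_nonneg: "0 \<le> W" and W_weighted: "W * \<rho>\<^sup>2 \<le> c" and \<Phi>_weighted: "\<bar>\<Phi>\<bar> * \<rho>\<^sup>2 \<le> m"
begin

lemma remainder_identity:
  "(W + \<Phi>)\<^sup>2 / Tg - W\<^sup>2 / Th - 2 * W * \<Phi> + W\<^sup>2 * Q
    = 2 * W * \<Phi> * ((1 - Tg) / Tg) + \<Phi>\<^sup>2 / Tg
      - W\<^sup>2 * (Tq * (1 - Tg * Th) / (Tg * Th) + (Tq - Q))"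
proof -
  have "Tg \<noteq> 0" "Th \<noteq> 0" and Tq: "Tq = Tg - Th"
    using Th_pos Tg_pos Tg_eq by simp_all
  then show ?thesis
    unfolding Tq by (simp add: field_simps power2_eq_square)
qed

lemma defect_div_\<rho>_le: "(t * \<rho> + m) / \<rho> \<le> m + t"
  using mult_left_mono[OF \<rho>_ge_1 m_nonneg] \<rho>_ge_1 by (simp add: divide_simps algebra_simps)

lemma c_power_mono: "i \<le> j \<Longrightarrow> c ^ i \<le> c ^ j"
  using c_ge_1 by (simp add: power_increasing)

lemma Tg_dist_1: "\<bar>1 - Tg\<bar> \<le> 2 * c * (t * \<rho> + m)"
proof -
  have "c * m \<le> c * (t * \<rho> + m)"
    using c_ge_1 t_nonneg \<rho>_ge_1 by (intro mult_left_mono) auto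
  then show ?thesis
    using Th_dist_1 abs_Tq_le Tg_eq by linarith
qed

lemma Tg_Th_dist_1: "\<bar>1 - Tg * Th\<bar> \<le> 3 * c\<^sup>2 * (t * \<rho> + m)"
proof -
  have "\<bar>1 - Tg * Th\<bar> = \<bar>(1 - Th) + Th * (1 - Tg)\<bar>"
    by (simp add: algebra_simps)
  also have "\<dots> \<le> \<bar>Th - 1\<bar> + \<bar>Th\<bar> * \<bar>1 - Tg\<bar>"
    using abs_triangle_ineq[of "1 - Th" "Th * (1 - Tg)"] by (simp add: abs_mult abs_minus_commute)
  also have "\<dots> \<le> c * (t * \<rho> + m) + c * (2 * c * (t * \<rho> + m))"
    using Th_dist_1 abs_Th_le Tg_dist_1 by (intro add_mono mult_mono) auto
  also have "\<dots> \<le> 3 * c\<^sup>2 * (t * \<rho> + m)"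
    using c_power_mono[of 1 2] t_nonneg \<rho>_ge_1 m_nonneg mult_right_mono[of c "c\<^sup>2" "t * \<rho> + m"]
    by (simp add: power2_eq_square algebra_simps)
  finally show ?thesis .
qed

lemma first_term_le: "\<rho>\<^sup>2 * \<bar>2 * W * \<Phi> * ((1 - Tg) / Tg)\<bar> \<le> 4 * c ^ 3 * m * (m + t)"
proof -
  have "\<bar>2 * W * \<Phi> * ((1 - Tg) / Tg)\<bar> = 2 * W * \<bar>\<Phi>\<bar> * \<bar>1 - Tg\<bar> * (1 / Tg)"
    using W_nonneg Tg_pos by (simp add: abs_mult)
  then have "\<rho>\<^sup>2 * \<bar>2 * W * \<Phi> * ((1 - Tg) / Tg)\<bar>
      = 2 * (W * \<rho>\<^sup>2) * (\<bar>\<Phi>\<bar> * \<rho>\<^sup>2) * \<bar>1 - Tg\<bar> * (1 / Tg) / \<rho>\<^sup>2"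
    using \<rho>_ge_1 by (simp add: field_simps power2_eq_square)
  also have "\<dots> \<le> 2 * c * m * (2 * c * (t * \<rho> + m)) * (c * \<rho>) / \<rho>\<^sup>2"
    using W_nonneg W_weighted \<Phi>_weighted Tg_dist_1 inverse_Tg_le Tg_pos m_nonneg c_ge_1
    by (intro divide_right_mono mult_mono) auto
  also have "\<dots> = 4 * c ^ 3 * m * ((t * \<rho> + m) / \<rho>)"
    using \<rho>_ge_1 by (simp add: field_simps power2_eq_square power3_eq_cube)
  also have "\<dots> \<le> 4 * c ^ 3 * m * (m + t)"
    using defect_div_\<rho>_le c_ge_1 m_nonneg by (intro mult_left_mono) auto
  finally show ?thesis .
qed

lemma second_term_le: "\<rho>\<^sup>2 * \<bar>\<Phi>\<^sup>2 / Tg\<bar> \<le> c * m * (m + t)"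
proof -
  have "\<rho>\<^sup>2 * \<bar>\<Phi>\<^sup>2 / Tg\<bar> = (\<bar>\<Phi>\<bar> * \<rho>\<^sup>2) * (\<bar>\<Phi>\<bar> * \<rho>\<^sup>2) * (1 / Tg) / \<rho>\<^sup>2"
    using Tg_pos \<rho>_ge_1 by (simp add: abs_mult field_simps power2_eq_square)
  also have "\<dots> \<le> m * (t * \<rho> + m) * (c * \<rho>) / \<rho>\<^sup>2"
    using \<Phi>_weighted inverse_Tg_le Tg_pos m_nonneg t_nonneg \<rho>_ge_1
    by (intro divide_right_mono mult_mono) (auto intro: order_trans[OF \<Phi>_weighted])
  also have "\<dots> = c * m * ((t * \<rho> + m) / \<rho>)"
    using \<rho>_ge_1 by (simp add: field_simps power2_eq_square)
  also have "\<dots> \<le> c * m * (m + t)"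
    using defect_div_\<rho>_le c_ge_1 m_nonneg by (intro mult_left_mono) auto
  finally show ?thesis .
qed

lemma correction_le:
  "\<bar>Tq * (1 - Tg * Th) / (Tg * Th) + (Tq - Q)\<bar> \<le> 4 * c ^ 4 * \<rho> * m * (t * \<rho> + m)"
proof -
  have "\<bar>Tq * (1 - Tg * Th) / (Tg * Th) + (Tq - Q)\<bar>
      \<le> \<bar>Tq\<bar> * \<bar>1 - Tg * Th\<bar> * (1 / (Tg * Th)) + \<bar>Tq - Q\<bar>"
    using abs_triangle_ineq[of "Tq * (1 - Tg * Th) / (Tg * Th)" "Tq - Q"] Th_pos Tg_pos
    by (simp add: abs_mult)
  also have "\<dots> \<le> (c * m) * (3 * c\<^sup>2 * (t * \<rho> + m)) * (c * \<rho>) + c * m * (t * \<rho> + m)"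
    using abs_Tq_le Tg_Th_dist_1 inverse_Tg_Th_le Tq_dist_Q Th_pos Tg_pos c_ge_1 m_nonneg
      t_nonneg \<rho>_ge_1
    by (intro add_mono mult_mono) auto
  also have "\<dots> \<le> 4 * c ^ 4 * \<rho> * m * (t * \<rho> + m)"
  proof -
    have "c * 1 \<le> c ^ 4 * \<rho>"
      using c_power_mono[of 1 4] \<rho>_ge_1 c_ge_1 by (intro mult_mono) auto
    from mult_right_mono[OF this, of "m * (t * \<rho> + m)"] show ?thesis
      using m_nonneg t_nonneg \<rho>_ge_1 by (simp add: power_numeral_reduce algebra_simps)
  qed
  finally show ?thesis .
qed

lemma third_term_le:
  "\<rho>\<^sup>2 * \<bar>W\<^sup>2 * (Tq * (1 - Tg * Th) / (Tg * Th) + (Tq - Q))\<bar> \<le> 4 * c ^ 6 * m * (m + t)"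
proof -
  define X where "X = Tq * (1 - Tg * Th) / (Tg * Th) + (Tq - Q)"
  have "\<rho>\<^sup>2 * \<bar>W\<^sup>2 * X\<bar> = (W * \<rho>\<^sup>2) * (W * \<rho>\<^sup>2) * \<bar>X\<bar> / \<rho>\<^sup>2"
    using \<rho>_ge_1 W_nonneg by (simp add: abs_mult field_simps power2_eq_square)
  also have "\<dots> \<le> c * c * (4 * c ^ 4 * \<rho> * m * (t * \<rho> + m)) / \<rho>\<^sup>2"
    using W_nonneg W_weighted correction_le c_ge_1 unfolding X_def
    by (intro divide_right_mono mult_mono) auto
  also have "\<dots> = 4 * c ^ 6 * m * ((t * \<rho> + m) / \<rho>)"
    using \<rho>_ge_1 by (simp add: field_simps power2_eq_square power_numeral_reduce)
  also have "\<dots> \<le> 4 * c ^ 6 * m * (m + t)"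
    using defect_div_\<rho>_le c_ge_1 m_nonneg by (intro mult_left_mono) auto
  finally show ?thesis
    by (simp add: X_def)
qed

lemma remainder_le:
  "\<rho>\<^sup>2 * \<bar>(W + \<Phi>)\<^sup>2 / Tg - W\<^sup>2 / Th - 2 * W * \<Phi> + W\<^sup>2 * Q\<bar> \<le> 9 * c ^ 6 * m * (m + t)"
proof -
  have triangle: "\<bar>a + b - d\<bar> \<le> \<bar>a\<bar> + \<bar>b\<bar> + \<bar>d\<bar>" for a b d :: real
    by linarith
  have "\<rho>\<^sup>2 * \<bar>(W + \<Phi>)\<^sup>2 / Tg - W\<^sup>2 / Th - 2 * W * \<Phi> + W\<^sup>2 * Q\<bar>
      \<le> \<rho>\<^sup>2 * \<bar>2 * W * \<Phi> * ((1 - Tg) / Tg)\<bar> + \<rho>\<^sup>2 * \<bar>\<Phi>\<^sup>2 / Tg\<bar>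
        + \<rho>\<^sup>2 * \<bar>W\<^sup>2 * (Tq * (1 - Tg * Th) / (Tg * Th) + (Tq - Q))\<bar>"
    unfolding remainder_identity distrib_left[symmetric] by (intro mult_left_mono triangle) simp
  also have "\<dots> \<le> (4 * c ^ 3 + c + 4 * c ^ 6) * m * (m + t)"
    using first_term_le second_term_le third_term_le by (simp add: algebra_simps)
  also have "\<dots> \<le> 9 * c ^ 6 * m * (m + t)"
    using c_power_mono[of 3 6] c_power_mono[of 1 6] m_nonneg t_nonneg by (intro mult_right_mono) auto
  finally show ?thesis .
qed

end

section \<open>The ground state and its perturbations\<close>

definition w_sq_integral :: real where
  "w_sq_integral = (LINT y|lborel. (w y)\<^sup>2)"

lemma w_sq_eq: "(w y)\<^sup>2 = 4 * quartic_decay y"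
  by (simp add: w_def quartic_decay_def power2_eq_square divide_inverse)

lemma w_pos: "0 < w y"
  using one_plus_square_pos[of y] by (simp add: w_def)

lemma w_ge_1: "y \<in> {-1..1} \<Longrightarrow> 1 \<le> w y"
  using abs_le_square_iff[of y 1] one_plus_square_pos[of y]
  by (auto simp: w_def abs_le_iff divide_simps)

lemma w_weighted_le_4: "w x * (1 + \<bar>x\<bar>)\<^sup>2 \<le> 4"
proof -
  have "(1 + \<bar>x\<bar>)\<^sup>2 \<le> 2 * (1 + x\<^sup>2)"
    using zero_le_power2[of "\<bar>x\<bar> - 1"] by (simp add: power2_eq_square algebra_simps)
  then show ?thesis
    using one_plus_square_pos[of x] by (simp add: w_def divide_simps)
qed

lemma w_sq_integral_ge_2: "2 \<le> w_sq_integral"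
proof -
  have "indicator {-1..1} y \<le> (w y)\<^sup>2" for y :: real
    using w_ge_1[of y] by (auto simp: indicator_def one_le_power)
  then have "(LINT y|lborel. indicator {-1..1::real} y) \<le> w_sq_integral"
    unfolding w_sq_integral_def using integrable_quartic_decay
    by (intro integral_mono) (auto simp: w_sq_eq)
  then show ?thesis
    by simp
qed

lemma T_eq_riesz_potential:
  assumes "0 < s" "s < 1/2"
  shows "T s f x = riesz_potential (1 - 2 * s) f x / w_sq_integral"
proof -
  have "0 < riesz_const s"
    using assms sin_gt_zero[of "s * pi"] by (simp add: riesz_const_def)
  then have "tau s * riesz_const s = 1 / w_sq_integral"
    using w_sq_integral_ge_2 by (simp add: tau_def w_sq_integral_def field_simps)
  then show ?thesis
    by (simp add: T_def riesz_potential_def)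
qed

lemma v_w_estimates:
  assumes s: "1/4 \<le> s" "s < 1/2"
  shows "0 < v_w s x"
    and "1 / v_w s x \<le> w_sq_integral / 2 * (1 + \<bar>x\<bar>) powr (1 - 2 * s)"
    and "\<bar>v_w s x - 1\<bar> \<le> 4 * quartic_decay_const * (1 - 2 * s) * (1 + \<bar>x\<bar>) / w_sq_integral"
    and "\<bar>v_w s x\<bar> \<le> 4 * quartic_decay_const / w_sq_integral"
proof -
  define h where "h y = (w y)\<^sup>2" for y
  have h_measurable [measurable]: "h \<in> borel_measurable lborel"
    unfolding h_def[abs_def] by measurable
  have h_bound: "\<bar>h y\<bar> \<le> 4 * quartic_decay y" for y
    by (simp add: h_def w_sq_eq quartic_decay_nonneg)
  have t: "0 \<le> 1 - 2 * s" "1 - 2 * s \<le> 1/2"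
    using s by auto
  note potential = riesz_potential_quartic_decay[OF h_measurable h_bound t, of x]
  have v_w: "v_w s x = riesz_potential (1 - 2 * s) h x / w_sq_integral"
    using s by (simp add: v_w_def h_def[abs_def] T_eq_riesz_potential)
  have I: "0 < w_sq_integral" "integral\<^sup>L lborel h = w_sq_integral"
    using w_sq_integral_ge_2 by (simp_all add: w_sq_integral_def h_def[abs_def])
  have "2 * 1 * (1 + \<bar>x\<bar>) powr -(1 - 2 * s) \<le> riesz_potential (1 - 2 * s) h x"
    by (rule riesz_potential_ge[OF _ _ potential(1)])
      (use w_ge_1 t in \<open>auto simp: h_def one_le_power\<close>)
  then have "2 * (1 + \<bar>x\<bar>) powr -(1 - 2 * s) \<le> w_sq_integral * v_w s x"
    using I by (simp add: v_w)
  from inverse_le_of_powr_lower_bound[OF _ I(1) _ this]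
  show "0 < v_w s x" "1 / v_w s x \<le> w_sq_integral / 2 * (1 + \<bar>x\<bar>) powr (1 - 2 * s)"
    by simp_all
  have "v_w s x - 1 = (riesz_potential (1 - 2 * s) h x - integral\<^sup>L lborel h) / w_sq_integral"
    using I by (simp add: v_w field_simps)
  then show "\<bar>v_w s x - 1\<bar> \<le> 4 * quartic_decay_const * (1 - 2 * s) * (1 + \<bar>x\<bar>) / w_sq_integral"
    using potential(3) I by (simp add: divide_right_mono)
  show "\<bar>v_w s x\<bar> \<le> 4 * quartic_decay_const / w_sq_integral"
    using potential(2) I by (simp add: v_w divide_right_mono)
qed

definition remainder_const :: real where
  "remainder_const = 4 + 5 * quartic_decay_const / w_sq_integral + 2 * w_sq_integral + w_sq_integral\<^sup>2"

lemma remainder_const_bounds: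
  "4 \<le> remainder_const" "4 * (quartic_decay_const / w_sq_integral) \<le> remainder_const"
  "5 * (quartic_decay_const / w_sq_integral) \<le> remainder_const"
  "2 * w_sq_integral \<le> remainder_const" "w_sq_integral\<^sup>2 \<le> remainder_const"
proof -
  have "0 < quartic_decay_const / w_sq_integral"
    using w_sq_integral_ge_2 quartic_decay_const_pos by simp
  then show "4 \<le> remainder_const" "4 * (quartic_decay_const / w_sq_integral) \<le> remainder_const"
    "5 * (quartic_decay_const / w_sq_integral) \<le> remainder_const"
    "2 * w_sq_integral \<le> remainder_const" "w_sq_integral\<^sup>2 \<le> remainder_const"
    using zero_le_power2[of w_sq_integral] w_sq_integral_ge_2
    unfolding remainder_const_def times_divide_eq_right[symmetric] by linarith+
qed

locale small_perturbation =
  fixes s m :: real and \<phi> :: "real \<Rightarrow> real"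
  assumes s_ge: "1/4 \<le> s" and s_less: "s < 1/2"
    and \<phi>_measurable [measurable]: "\<phi> \<in> borel_measurable lborel"
    and \<phi>_weighted: "\<And>y. (1 + \<bar>y\<bar>)\<^sup>2 * \<bar>\<phi> y\<bar> \<le> m" and m_le_1: "m \<le> 1"
begin

definition perturbation_term :: "real \<Rightarrow> real" where
  "perturbation_term y = 2 * w y * \<phi> y + (\<phi> y)\<^sup>2"

lemma perturbation_term_measurable [measurable]: "perturbation_term \<in> borel_measurable lborel"
  unfolding perturbation_term_def[abs_def] by measurable

lemma m_nonneg: "0 \<le> m"
  by (rule order_trans[OF _ \<phi>_weighted[of 0]]) simp

lemma s_pos: "0 < s"
  using s_ge by simp

lemma exponent_bounds: "0 \<le> 1 - 2 * s" "1 - 2 * s \<le> 1/2"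
  using s_ge s_less by auto

lemma abs_le_half_w: "\<bar>\<phi> y\<bar> \<le> w y / 2"
  and abs_w_mult_le: "\<bar>w y * \<phi> y\<bar> \<le> 2 * m * quartic_decay y"
  and abs_square_le: "\<bar>(\<phi> y)\<^sup>2\<bar> \<le> m\<^sup>2 * quartic_decay y"
proof -
  have "(1 + y\<^sup>2) * \<bar>\<phi> y\<bar> \<le> (1 + \<bar>y\<bar>)\<^sup>2 * \<bar>\<phi> y\<bar>"
    by (intro mult_right_mono) (auto simp: power2_eq_square algebra_simps)
  then have \<phi>: "\<bar>\<phi> y\<bar> \<le> m * inverse (1 + y\<^sup>2)"
    using \<phi>_weighted[of y] one_plus_square_pos[of y] by (simp add: field_simps)
  have w: "w y = 2 * inverse (1 + y\<^sup>2)" and decay: "quartic_decay y = inverse (1 + y\<^sup>2) ^ 2"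
    by (simp_all add: w_def quartic_decay_def divide_inverse power_inverse)
  show "\<bar>\<phi> y\<bar> \<le> w y / 2"
    using \<phi> mult_right_mono[OF m_le_1, of "inverse (1 + y\<^sup>2)"] by (simp add: w)
  show "\<bar>w y * \<phi> y\<bar> \<le> 2 * m * quartic_decay y"
    using mult_left_mono[OF \<phi>, of "w y"] w_pos[of y]
    by (simp add: abs_mult w decay power2_eq_square algebra_simps)
  show "\<bar>(\<phi> y)\<^sup>2\<bar> \<le> m\<^sup>2 * quartic_decay y"
    using power_mono[OF \<phi>, of 2] by (simp add: decay power_mult_distrib)
qed

lemma abs_perturbation_term_le: "\<bar>perturbation_term y\<bar> \<le> 5 * m * quartic_decay y"
proof -
  have "m\<^sup>2 * quartic_decay y \<le> m * quartic_decay y"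
    using m_nonneg m_le_1
    by (intro mult_right_mono) (simp_all add: power2_eq_square mult_left_le quartic_decay_nonneg)
  moreover have "\<bar>perturbation_term y\<bar> \<le> 2 * \<bar>w y * \<phi> y\<bar> + \<bar>(\<phi> y)\<^sup>2\<bar>"
    using abs_triangle_ineq[of "2 * w y * \<phi> y" "(\<phi> y)\<^sup>2"]
    by (simp add: perturbation_term_def abs_mult mult.assoc)
  ultimately show ?thesis
    using abs_w_mult_le[of y] abs_square_le[of y] by linarith
qed

lemma integral_perturbation_term:
  "integral\<^sup>L lborel perturbation_term
    = 2 * (LINT y|lborel. w y * \<phi> y) + (LINT y|lborel. (\<phi> y)\<^sup>2)"
  using integral_dominated_by_quartic_decay(1)[of "\<lambda>y. w y * \<phi> y" "2 * m"] abs_w_mult_le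
    integral_dominated_by_quartic_decay(1)[of "\<lambda>y. (\<phi> y)\<^sup>2" "m\<^sup>2"] abs_square_le
  by (simp add: perturbation_term_def[abs_def] mult.assoc)

lemma integrable_riesz_w_sq:
  "integrable lborel (\<lambda>y. \<bar>x - y\<bar> powr (-(1 - 2 * s)) * (w y)\<^sup>2)"
  by (rule riesz_potential_quartic_decay(1)[where B=4, OF _ _ exponent_bounds])
    (simp_all add: w_sq_eq quartic_decay_nonneg)

lemmas riesz_potential_perturbation_term =
  riesz_potential_quartic_decay[OF perturbation_term_measurable abs_perturbation_term_le exponent_bounds]

lemma square_eq: "(w y + \<phi> y)\<^sup>2 = (w y)\<^sup>2 + perturbation_term y"
  by (simp add: perturbation_term_def power2_sum)

lemma integrable_riesz_square:
  "integrable lborel (\<lambda>y. \<bar>x - y\<bar> powr (-(1 - 2 * s)) * (w y + \<phi> y)\<^sup>2)"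
  unfolding square_eq distrib_left
  by (rule Bochner_Integration.integrable_add[OF integrable_riesz_w_sq riesz_potential_perturbation_term(1)])

lemma T_square_eq: "T s (\<lambda>y. (w y + \<phi> y)\<^sup>2) x = v_w s x + T s perturbation_term x"
proof -
  have "riesz_potential (1 - 2 * s) (\<lambda>y. (w y + \<phi> y)\<^sup>2) x
      = riesz_potential (1 - 2 * s) (\<lambda>y. (w y)\<^sup>2) x + riesz_potential (1 - 2 * s) perturbation_term x"
    unfolding riesz_potential_def square_eq distrib_left
    by (rule Bochner_Integration.integral_add[OF integrable_riesz_w_sq riesz_potential_perturbation_term(1)])
  then show ?thesis
    by (simp add: T_eq_riesz_potential[OF s_pos s_less] v_w_def add_divide_distrib)
qed

lemma T_square_pos: "0 < T s (\<lambda>y. (w y + \<phi> y)\<^sup>2) x"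
  and inverse_T_square_le:
    "1 / T s (\<lambda>y. (w y + \<phi> y)\<^sup>2) x \<le> 2 * w_sq_integral * (1 + \<bar>x\<bar>) powr (1 - 2 * s)"
proof -
  have "1 / 4 \<le> (w y + \<phi> y)\<^sup>2" if "y \<in> {-1..1}" for y
  proof -
    have "1 / 2 \<le> w y + \<phi> y"
      using abs_le_half_w[of y] w_ge_1[OF that] by linarith
    from power_mono[OF this, of 2] show ?thesis
      by (simp add: power2_eq_square)
  qed
  then have "2 * (1 / 4) * (1 + \<bar>x\<bar>) powr -(1 - 2 * s)
      \<le> riesz_potential (1 - 2 * s) (\<lambda>y. (w y + \<phi> y)\<^sup>2) x"
    using integrable_riesz_square exponent_bounds by (intro riesz_potential_ge) auto
  then have "1 / 2 * (1 + \<bar>x\<bar>) powr -(1 - 2 * s) \<le> w_sq_integral * T s (\<lambda>y. (w y + \<phi> y)\<^sup>2) x"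
    using w_sq_integral_ge_2 by (simp add: T_eq_riesz_potential[OF s_pos s_less])
  from inverse_le_of_powr_lower_bound[OF _ _ _ this] w_sq_integral_ge_2
  show "0 < T s (\<lambda>y. (w y + \<phi> y)\<^sup>2) x"
    and "1 / T s (\<lambda>y. (w y + \<phi> y)\<^sup>2) x \<le> 2 * w_sq_integral * (1 + \<bar>x\<bar>) powr (1 - 2 * s)"
    by (simp_all add: mult.commute)
qed

lemma abs_T_perturbation_le:
  "\<bar>T s perturbation_term x\<bar> \<le> 5 * quartic_decay_const * m / w_sq_integral"
proof -
  have "\<bar>riesz_potential (1 - 2 * s) perturbation_term x\<bar> \<le> 5 * quartic_decay_const * m"
    using riesz_potential_perturbation_term(2)[of x] by (simp add: algebra_simps)
  then show ?thesis
    using w_sq_integral_ge_2 by (simp add: T_eq_riesz_potential[OF s_pos s_less] divide_right_mono)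
qed

lemma T_perturbation_dist_le:
  "\<bar>T s perturbation_term x - 2 * (LINT y|lborel. w y * \<phi> y) / w_sq_integral\<bar>
    \<le> 5 * quartic_decay_const * m * ((1 - 2 * s) * (1 + \<bar>x\<bar>) + m) / w_sq_integral"
proof -
  have "\<bar>LINT y|lborel. (\<phi> y)\<^sup>2\<bar> \<le> m\<^sup>2 * quartic_decay_const"
    by (rule integral_dominated_by_quartic_decay(2)) (use abs_square_le in auto)
  then have "\<bar>riesz_potential (1 - 2 * s) perturbation_term x - 2 * (LINT y|lborel. w y * \<phi> y)\<bar>
      \<le> 5 * m * quartic_decay_const * (1 - 2 * s) * (1 + \<bar>x\<bar>) + m\<^sup>2 * quartic_decay_const"
    using riesz_potential_perturbation_term(3)[of x] integral_perturbation_term by linarith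
  also have "\<dots> \<le> 5 * quartic_decay_const * m * ((1 - 2 * s) * (1 + \<bar>x\<bar>) + m)"
    using m_nonneg quartic_decay_const_pos
    by (simp add: power2_eq_square algebra_simps mult_left_mono)
  finally show ?thesis
    using w_sq_integral_ge_2 by (simp add: T_eq_riesz_potential[OF s_pos s_less] diff_divide_distrib[symmetric] divide_right_mono)
qed

lemma remainder_bounds_at:
  "remainder_bounds remainder_const (1 + \<bar>x\<bar>) (1 - 2 * s) m (w x) (\<phi> x) (v_w s x)
    (T s (\<lambda>y. (w y + \<phi> y)\<^sup>2) x) (T s perturbation_term x)
    (2 * (LINT y|lborel. w y * \<phi> y) / w_sq_integral)"
proof -
  define I K where "I = w_sq_integral" and "K = quartic_decay_const"
  define \<rho> t where "\<rho> = 1 + \<bar>x\<bar>" and "t = 1 - 2 * s"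
  define Th Tg Tq where "Th = v_w s x" and "Tg = T s (\<lambda>y. (w y + \<phi> y)\<^sup>2) x"
    and "Tq = T s perturbation_term x"
  have "2 \<le> I" "1 \<le> \<rho>" "0 \<le> t" "2 * t \<le> 1"
    using w_sq_integral_ge_2 exponent_bounds by (auto simp: I_def \<rho>_def t_def)
  note const = remainder_const_bounds[folded I_def K_def]
  have "\<rho> powr t \<le> \<rho>" "\<rho> powr t * \<rho> powr t \<le> \<rho>"
    using \<open>1 \<le> \<rho>\<close> \<open>0 \<le> t\<close> \<open>2 * t \<le> 1\<close> powr_mono[of t 1 \<rho>] powr_mono[of "t + t" 1 \<rho>]
    by (simp_all add: powr_add[symmetric])
  note v_w = v_w_estimates[OF s_ge s_less, of x, folded I_def K_def \<rho>_def t_def Th_def]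
  note Tg = T_square_pos[of x, folded Tg_def] inverse_T_square_le[of x, folded I_def \<rho>_def t_def Tg_def]
  note Tq = abs_T_perturbation_le[of x, folded I_def K_def Tq_def]
    T_perturbation_dist_le[of x, folded I_def K_def \<rho>_def t_def Tq_def]
  show ?thesis
    unfolding \<rho>_def[symmetric] t_def[symmetric] I_def[symmetric] Th_def[symmetric]
      Tg_def[symmetric] Tq_def[symmetric]
  proof
    have "2 * I * \<rho> powr t \<le> remainder_const * \<rho>"
      using const(1,4) \<open>\<rho> powr t \<le> \<rho>\<close> by (intro mult_mono) auto
    then show "1 / Tg \<le> remainder_const * \<rho>"
      using Tg(2) by linarith
    have "1 / (Tg * Th) = (1 / Tg) * (1 / Th)"
      by simp
    also have "\<dots> \<le> (2 * I * \<rho> powr t) * (I / 2 * \<rho> powr t)"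
      using Tg v_w(1,2) \<open>2 \<le> I\<close> by (intro mult_mono) auto
    also have "\<dots> = I\<^sup>2 * (\<rho> powr t * \<rho> powr t)"
      by (simp add: power2_eq_square)
    also have "\<dots> \<le> remainder_const * \<rho>"
      using const(1,5) \<open>\<rho> powr t * \<rho> powr t \<le> \<rho>\<close> by (intro mult_mono) auto
    finally show "1 / (Tg * Th) \<le> remainder_const * \<rho>" .
    have "\<bar>Th - 1\<bar> \<le> 4 * (K / I) * (t * \<rho>)"
      using v_w(3) by simp
    also have "\<dots> \<le> remainder_const * (t * \<rho> + m)"
      using const(1,2) \<open>0 \<le> t\<close> \<open>1 \<le> \<rho>\<close> m_nonneg by (intro mult_mono) auto
    finally show "\<bar>Th - 1\<bar> \<le> remainder_const * (t * \<rho> + m)" .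
    show "\<bar>Th\<bar> \<le> remainder_const"
      using v_w(4) const(2) by simp
    show "\<bar>Tq\<bar> \<le> remainder_const * m"
      using Tq(1) mult_right_mono[OF const(3) m_nonneg] by simp
    show "\<bar>Tq - 2 * (LINT y|lborel. w y * \<phi> y) / I\<bar> \<le> remainder_const * m * (t * \<rho> + m)"
      using Tq(2) mult_right_mono[OF const(3), of "m * (t * \<rho> + m)"] m_nonneg \<open>0 \<le> t\<close> \<open>1 \<le> \<rho>\<close>
      by (simp add: mult.assoc)
    show "w x * \<rho>\<^sup>2 \<le> remainder_const"
      using w_weighted_le_4[of x] const(1) by (simp add: \<rho>_def)
  qed (use \<open>1 \<le> \<rho>\<close> \<open>0 \<le> t\<close> m_nonneg const(1) T_square_eq Tg(1) v_w(1) w_pos[of x] \<phi>_weighted[of x]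
      in \<open>auto simp: \<rho>_def Th_def Tg_def Tq_def mult.commute\<close>)
qed

lemma N_estimate:
  "(1 + \<bar>x\<bar>)\<^sup>2 * \<bar>N s \<phi> x\<bar> \<le> 9 * remainder_const ^ 6 * m * (m + (1 - 2 * s))"
proof -
  interpret remainder_bounds remainder_const "1 + \<bar>x\<bar>" "1 - 2 * s" m "w x" "\<phi> x" "v_w s x"
    "T s (\<lambda>y. (w y + \<phi> y)\<^sup>2) x" "T s perturbation_term x"
    "2 * (LINT y|lborel. w y * \<phi> y) / w_sq_integral"
    by (rule remainder_bounds_at)
  have "N s \<phi> x = (w x + \<phi> x)\<^sup>2 / T s (\<lambda>y. (w y + \<phi> y)\<^sup>2) x - (w x)\<^sup>2 / v_w s x
      - 2 * w x * \<phi> x + (w x)\<^sup>2 * (2 * (LINT y|lborel. w y * \<phi> y) / w_sq_integral)"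
    by (simp add: N_def w_sq_integral_def)
  with remainder_le show ?thesis
    by simp
qed

end

section \<open>The estimate on D\<close>

lemma star_norm_bounds:
  fixes \<phi> :: "real \<Rightarrow> real" and b :: real
  assumes "\<And>x. (1 + \<bar>x\<bar>)\<^sup>2 * \<bar>\<phi> x\<bar> \<le> b"
  shows "(1 + \<bar>x\<bar>)\<^sup>2 * \<bar>\<phi> x\<bar> \<le> star_norm \<phi>" and "star_norm \<phi> \<le> b"
proof -
  have "bdd_above (range (\<lambda>x. (1 + \<bar>x\<bar>)\<^sup>2 * \<bar>\<phi> x\<bar>))"
    using assms by (intro bdd_aboveI[of _ b]) auto
  then show "(1 + \<bar>x\<bar>)\<^sup>2 * \<bar>\<phi> x\<bar> \<le> star_norm \<phi>"
    unfolding star_norm_def by (rule cSUP_upper[OF UNIV_I])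
  show "star_norm \<phi> \<le> b"
    unfolding star_norm_def using assms by (intro cSUP_least) auto
qed

lemma mult_powr_le_1_of_le_root:
  fixes C0 \<delta> t :: real
  assumes "0 < C0" "\<delta> < 1" "0 \<le> t" "t \<le> (1 / C0) powr (1 / (1 - \<delta>))"
  shows "C0 * t powr (1 - \<delta>) \<le> 1"
proof -
  have "t powr (1 - \<delta>) \<le> ((1 / C0) powr (1 / (1 - \<delta>))) powr (1 - \<delta>)"
    using assms by (intro powr_mono2) auto
  also have "\<dots> = 1 / C0"
    using assms by (simp add: powr_powr)
  finally show ?thesis
    using assms(1) by (simp add: field_simps)
qed

lemma N_estimate_on_D_set:
  fixes \<phi> :: "real \<Rightarrow> real" and C0 \<delta> s x :: real
  assumes "0 < C0" "\<delta> < 1" "0 < s" "s < 1/2"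
    and "1 - 2 * s \<le> min (1/2) ((1 / C0) powr (1 / (1 - \<delta>)))"
    and "\<phi> \<in> D_set C0 \<delta> s"
  shows "(1 + \<bar>x\<bar>)\<^sup>2 * \<bar>N s \<phi> x\<bar>
    \<le> 9 * remainder_const ^ 6 * (star_norm \<phi> + (1 - 2 * s)) * star_norm \<phi>"
proof -
  have "\<phi> \<in> borel_measurable lborel"
    and \<phi>: "\<And>y. (1 + \<bar>y\<bar>)\<^sup>2 * \<bar>\<phi> y\<bar> \<le> C0 * (1 - 2 * s) powr (1 - \<delta>)"
    using \<open>\<phi> \<in> D_set C0 \<delta> s\<close> by (auto simp: D_set_def H_space_def)
  moreover have "C0 * (1 - 2 * s) powr (1 - \<delta>) \<le> 1" "1/4 \<le> s"
    using mult_powr_le_1_of_le_root[of C0 \<delta> "1 - 2 * s"] assms by auto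
  ultimately interpret small_perturbation s "star_norm \<phi>" \<phi>
    using star_norm_bounds[OF \<phi>] \<open>s < 1/2\<close> by unfold_locales auto
  show ?thesis
    using N_estimate[of x] by (simp add: algebra_simps)
qed

lemma N_estimate_near_one_half:
  fixes \<delta> C0 :: real
  assumes "0 < \<delta>" "\<delta> < 1" "0 < C0"
  shows "\<exists>C>0. \<exists>\<sigma>::real \<Rightarrow> real. \<exists>\<epsilon>>0.
    (\<forall>t. 0 < t \<and> t < \<epsilon> \<longrightarrow> \<sigma> t \<le> C * t powr (1 - \<delta>)) \<and>
    (\<forall>s. 0 < s \<and> s < 1/2 \<and> 1 - 2 * s < \<epsilon> \<longrightarrow>
      (\<forall>\<phi> \<in> D_set C0 \<delta> s. \<forall>x.
        (1 + \<bar>x\<bar>)^2 * \<bar>N s \<phi> x\<bar> \<le> C * (star_norm \<phi> + \<sigma> (1 - 2 * s)) * star_norm \<phi>))"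
proof (intro exI conjI)
  define \<epsilon> where "\<epsilon> = min (1/2) ((1 / C0) powr (1 / (1 - \<delta>)))"
  have "1 \<le> remainder_const ^ 6"
    using remainder_const_bounds(1) by (intro one_le_power) simp
  then have C: "1 \<le> 9 * remainder_const ^ 6"
    by linarith
  then show "0 < 9 * remainder_const ^ 6" "0 < \<epsilon>"
    using \<open>0 < C0\<close> by (auto simp: \<epsilon>_def)
  show "\<forall>t. 0 < t \<and> t < \<epsilon> \<longrightarrow> t \<le> 9 * remainder_const ^ 6 * t powr (1 - \<delta>)"
  proof (intro allI impI)
    fix t :: real
    assume t: "0 < t \<and> t < \<epsilon>"
    then have "t powr 1 \<le> t powr (1 - \<delta>)"
      using \<open>0 < \<delta>\<close> by (intro powr_mono') (auto simp: \<epsilon>_def)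
    also have "\<dots> \<le> 9 * remainder_const ^ 6 * t powr (1 - \<delta>)"
      using mult_right_mono[OF C powr_ge_zero] by simp
    finally show "t \<le> 9 * remainder_const ^ 6 * t powr (1 - \<delta>)"
      using t by simp
  qed
  show "\<forall>s. 0 < s \<and> s < 1/2 \<and> 1 - 2 * s < \<epsilon> \<longrightarrow> (\<forall>\<phi> \<in> D_set C0 \<delta> s. \<forall>x.
      (1 + \<bar>x\<bar>)^2 * \<bar>N s \<phi> x\<bar> \<le> 9 * remainder_const ^ 6 * (star_norm \<phi> + (1 - 2 * s)) * star_norm \<phi>)"
    using N_estimate_on_D_set assms by (auto simp: \<epsilon>_def)
qed

theorem lemma6p6:
  shows "\<exists>\<delta>0>0. \<forall>\<delta>. 0 < \<delta> \<and> \<delta> < \<delta>0 \<longrightarrow> (\<forall>C0>0.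
     \<exists>C>0. \<exists>\<sigma>::real \<Rightarrow> real. \<exists>\<epsilon>>0.
       (\<forall>t. 0 < t \<and> t < \<epsilon> \<longrightarrow> \<sigma> t \<le> C * t powr (1 - \<delta>)) \<and>
       (\<forall>s. 0 < s \<and> s < 1/2 \<and> 1 - 2 * s < \<epsilon> \<longrightarrow>
          (\<forall>\<phi> \<in> D_set C0 \<delta> s. \<forall>x.
             (1 + \<bar>x\<bar>)^2 * \<bar>N s \<phi> x\<bar>
               \<le> C * (star_norm \<phi> + \<sigma> (1 - 2 * s)) * star_norm \<phi>)))"
  using N_estimate_near_one_half by (intro exI[of _ "1::real"]) auto

end
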